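(* Let $N$ be a nonnegative integer and let $f,a_1,d_1,d_2\in\mathbb{C}$ be such that every hypergeometric series below is well defined (no lower parameter is a nonpositive integer) and the denominator in the definition of $k$ below is nonzero. Put $$h=1-f+d_1+d_2-N,\qquad k=\frac{h(1+d_1+a_1-f)(1+d_2+a_1-f)}{d_1d_2-h(1+d_1+d_2+a_1-f)}.$$ Then $$ {}_{7}F_{6}\left[\begin{matrix} f-1,\ \frac{f+1}{2},\ a_1,\ d_1,\ d_2,\ 2f-2-d_1-d_2-a_1+N,\ -N\\ \frac{f-1}{2},\ f-a_1,\ f-d_1,\ f-d_2,\ 2+a_1+d_1+d_2-f-N,\ f+N\end{matrix};1\right]$$ $$=\frac{(f)_N\,(f-d_1-d_2)_N\,(f-a_1-d_1-1)_N\,(f-a_1-d_2-1)_N}{(f-d_1)_N\,(f-d_2)_N\,(f-a_1)_N\,(f-a_1-d_1-d_2-1)_N}\cdot\frac{(k+1)_N}{(k)_N}.$$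
   Context: $(x)_n$ denotes the Pochhammer symbol: $(x)_0=1$, $(x)_n=x(x+1)\cdots(x+n-1)$ for $n\ge1$. The generalized hypergeometric function is $${}_{r+1}F_{r}\left[\begin{matrix} a_1,\dots,a_{r+1}\\ b_1,\dots,b_r\end{matrix};z\right]=\sum_{n=0}^{\infty}\frac{(a_1)_n\cdots(a_{r+1})_n}{(b_1)_n\cdots(b_r)_n\,n!}z^n ,$$ where no $b_i$ is a nonpositive integer; when one upper parameter equals $-N$ with $N$ a nonnegative integer the series terminates. *)

theory Defs
  imports "HOL-Analysis.Analysis"
begin

definition hyper_term :: "complex list \<Rightarrow> complex list \<Rightarrow> complex \<Rightarrow> nat \<Rightarrow> complex" where
  "hyper_term as bs z n =
     (\<Prod>a\<leftarrow>as. pochhammer a n) / ((\<Prod>b\<leftarrow>bs. pochhammer b n) * fact n) * z ^ n"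

definition hypergeom :: "complex list \<Rightarrow> complex list \<Rightarrow> complex \<Rightarrow> complex" where
  "hypergeom as bs z = (\<Sum>n. hyper_term as bs z n)"

definition nonpos_int :: "complex \<Rightarrow> bool" where
  "nonpos_int b \<longleftrightarrow> (\<exists>m::nat. b = - of_nat m)"

end

theory Submission
  imports Defs "HOL-Complex_Analysis.Complex_Analysis"
begin

(* With a = f - 1, b = a1, c = d1, d = d2 the series is the very-well-poised 7F6 with parameters
   a, 1 + a/2, b, c, d, e, -N where e = 2a - b - c - d + N, i.e. one unit away from Dougall's
   balancing condition.  Call its sum S(N).  For generic parameters the Wilf-Zeilberger method
   applies: an explicit rational certificate turns rho(N) t(N+1,n) - t(N,n) into a difference
   G(n+1) - G(n), so rho(N) S(N+1) = S(N), and the closed form satisfies the same recursion.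
   Generic means that finitely many linear forms in a, b, c, d avoid the integers and a cubic
   K does not vanish; arbitrary parameters are reached by moving along a line in parameter space
   on which this holds near, but not at, the given point, and passing to the limit: both sides
   are continuous there as long as the lower parameters are not poles. *)

lemma prod_list_multf:
  fixes f g :: "'a \<Rightarrow> 'b::comm_monoid_mult"
  shows "(\<Prod>x\<leftarrow>xs. f x * g x) = (\<Prod>x\<leftarrow>xs. f x) * (\<Prod>x\<leftarrow>xs. g x)"
  by (induct xs) (simp_all add: ac_simps)

lemma hyper_term_Suc:
  "hyper_term as bs z (Suc n) = hyper_term as bs z n *
     ((\<Prod>a\<leftarrow>as. a + of_nat n) * z / ((\<Prod>b\<leftarrow>bs. b + of_nat n) * of_nat (Suc n)))"
  unfolding hyper_term_def pochhammer_Suc prod_list_multf fact_Suc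
  by (simp add: field_simps)

lemma pochhammer_shift: "x * pochhammer (x + 1) n = pochhammer x n * (x + of_nat n)"
  by (metis pochhammer_Suc pochhammer_rec)

lemma pochhammer_nonzero_if_not_nonpos_int: "\<not> nonpos_int x \<Longrightarrow> pochhammer x n \<noteq> 0"
  unfolding nonpos_int_def by (auto simp: pochhammer_eq_0_iff)

lemma notin_Ints_shift:
  fixes x y :: "'a::ring_1"
  assumes "x \<notin> \<int>" and "y - x \<in> \<int> \<or> y + x \<in> \<int>"
  shows "y \<notin> \<int>"
proof
  assume "y \<in> \<int>"
  with assms(2) have "y - (y - x) \<in> \<int> \<or> (y + x) - y \<in> \<int>"
    by (auto intro: Ints_diff)
  with assms(1) show False
    by simp
qed

lemma nonzero_if_notin_Ints:
  fixes x y :: "'a::ring_1"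
  shows "x \<notin> \<int> \<Longrightarrow> y - x \<in> \<int> \<or> y + x \<in> \<int> \<Longrightarrow> y \<noteq> 0"
  using notin_Ints_shift by fastforce

lemma pochhammer_nonzero_if_notin_Ints:
  fixes x y :: "'a::field_char_0"
  shows "x \<notin> \<int> \<Longrightarrow> y - x \<in> \<int> \<or> y + x \<in> \<int> \<Longrightarrow> pochhammer y n \<noteq> 0"
  using notin_Ints_shift by (fastforce simp: pochhammer_eq_0_iff)

lemma isCont_pochhammer' [continuous_intros]:
  fixes f :: "'a::t2_space \<Rightarrow> 'b::real_normed_field"
  assumes "isCont f z"
  shows "isCont (\<lambda>s. pochhammer (f s) n) z"
  by (induct n) (simp_all add: pochhammer_rec' assms)

lemma isCont_eq_if_eventually_eq:
  fixes f g :: "'a::{t2_space,perfect_space} \<Rightarrow> 'b::t2_space"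
  assumes "isCont f z" and "isCont g z" and "\<forall>\<^sub>F x in at z. f x = g x"
  shows "f z = g z"
proof -
  have "(f \<longlongrightarrow> g z) (at z)"
    using Lim_transform_eventually[OF isContD[OF assms(2)]] assms(3)
    by (simp add: eq_commute)
  then show ?thesis
    using tendsto_unique[OF at_neq_bot isContD[OF assms(1)]] by simp
qed

lemma eventually_linear_notin_Ints:
  fixes \<alpha> \<beta> :: complex
  assumes "\<beta> \<noteq> 0"
  shows "\<forall>\<^sub>F s in at 0. \<alpha> + \<beta> * s \<notin> \<int>"
proof -
  have "open (- (\<int> - {\<alpha>}))"
    by (intro open_Compl closed_subset_Ints) auto
  moreover have "((\<lambda>s. \<alpha> + \<beta> * s) \<longlongrightarrow> \<alpha>) (at 0)"
    by (auto intro!: tendsto_eq_intros)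
  ultimately have "\<forall>\<^sub>F s in at 0. \<alpha> + \<beta> * s \<in> - (\<int> - {\<alpha>})"
    using topological_tendstoD by blast
  moreover have "\<forall>\<^sub>F s in at 0. s \<noteq> 0"
    by (simp add: eventually_at_filter)
  ultimately show ?thesis
    by eventually_elim (use assms in auto)
qed

context
  fixes a b c d :: complex
begin

definition e_param :: "complex \<Rightarrow> complex" where
  "e_param m = 2*a - b - c - d + m"

definition h_param :: "complex \<Rightarrow> complex" where
  "h_param m = c + d - a - m"

(* With the paper's h and k at m = N: k_poly N / (h (b+c-a) (b+d-a)) = (k + N) / k. *)
definition k_poly :: "complex \<Rightarrow> complex" where
  "k_poly m = h_param m * (b+c-a) * (b+d-a) + m * (c*d - h_param m * (b+c+d-a))"

definition contig_term :: "nat \<Rightarrow> nat \<Rightarrow> complex" where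
  "contig_term N n = hyper_term [a, 1 + a/2, b, c, d, e_param (of_nat N), - of_nat N]
     [a/2, 1 + a - b, 1 + a - c, 1 + a - d, 1 + a - e_param (of_nat N), 1 + a + of_nat N] 1 n"

definition pi_factor :: "nat \<Rightarrow> complex" where
  "pi_factor N = pochhammer (1+a) N * pochhammer (1+a-c-d) N * pochhammer (a-b-c) N * pochhammer (a-b-d) N
     / (pochhammer (1+a-b) N * pochhammer (1+a-c) N * pochhammer (1+a-d) N * pochhammer (a-b-c-d) N)"

definition contig_closed_form :: "nat \<Rightarrow> complex" where
  "contig_closed_form N = pi_factor N * k_poly (of_nat N) / (h_param (of_nat N) * ((b+c-a)*(b+d-a)))"

definition cert_den :: "complex \<Rightarrow> complex" where
  "cert_den m = (a-b-c+m) * (a-b-d+m) * k_poly (m+1) * h_param m"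

definition shift_ratio :: "complex \<Rightarrow> complex" where
  "shift_ratio m = (1+a-b+m)*(1+a-c+m)*(1+a-d+m)*(a-b-c-d+m)*k_poly m*h_param (m+1)
     / ((1+a+m)*(1+a-c-d+m)*cert_den m)"

definition wz_cert :: "complex \<Rightarrow> complex \<Rightarrow> complex" where
  "wz_cert m n = (e_param m+m+1)*(a-e_param m)*(1+a+m+n)*n*(n+a-b)*(n+a-c)*(n+a-d)
       *((n-m-1)*(n+a+m) - k_poly m)
     / ((m+1)*(e_param m+n)*(1+a+m)*(a+2*n)*cert_den m)"

definition nonresonant :: bool where
  "nonresonant \<longleftrightarrow> (\<forall>x\<in>{a, a-b, a-c, a-d, a-b-c, a-b-d, a-c-d, a-b-c-d, 2*a-b-c-d}. x \<notin> \<int>)"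

lemma contig_term_0 [simp]: "contig_term N 0 = 1"
  by (simp add: contig_term_def hyper_term_def)

lemma contig_term_eq_0: "N < n \<Longrightarrow> contig_term N n = 0"
  unfolding contig_term_def hyper_term_def by (simp add: pochhammer_of_nat_eq_0_lemma)

lemma contig_term_Suc:
  fixes N n :: nat
  defines "m \<equiv> of_nat N" and "x \<equiv> of_nat n" and "E \<equiv> e_param (of_nat N)"
  shows "contig_term N (Suc n) = contig_term N n *
    ((a+x)*(1+a/2+x)*(b+x)*(c+x)*(d+x)*(E+x)*(-m+x)
     / ((a/2+x)*(1+a-b+x)*(1+a-c+x)*(1+a-d+x)*(1+a-E+x)*(1+a+m+x)*(x+1)))"
  unfolding contig_term_def hyper_term_Suc m_def x_def E_def by (simp add: ac_simps)

lemma shift_ratio_poly: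
  fixes m :: complex
  shows "(1+a-b+m)*(1+a-c+m)*(1+a-d+m)*(a-b-c-d+m)*k_poly m*h_param (m+1)
     = (1+a+m)*(1+a-c-d+m)*cert_den m
       + (m*(1+a+m) + k_poly m) * b * c * d * (e_param m+m+1) * (1+a-c-d+m)"
  unfolding cert_den_def k_poly_def h_param_def e_param_def by algebra

lemma wz_poly:
  fixes m n :: complex
  defines "E \<equiv> e_param m"
  shows "(m+1)*(1+a+m)*(a+2*n)*cert_den m*(E+n)*(a-E+n)
          + (m*(1+a+m) + k_poly m)*b*c*d*(E+m+1)*(m+1)*(a+2*n)*(E+n)*(a-E+n)
          - (m+1-n)*E*(a-E)*(1+a+m+n)*(a+2*n)*cert_den m
       = (E+m+1)*(a-E)*(a+n)*(b+n)*(c+n)*(d+n)*(n-m-1)*((n-m)*(n+a+m+1) - k_poly m)*(E+n)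
         - (E+m+1)*(a-E)*(1+a+m+n)*n*(n+a-b)*(n+a-c)*(n+a-d)*((n-m-1)*(n+a+m) - k_poly m)*(a-E+n)"
  unfolding E_def cert_den_def k_poly_def h_param_def e_param_def by algebra

lemma shift_ratio_eq:
  fixes m :: complex
  assumes "1+a+m \<noteq> 0" and "1+a-c-d+m \<noteq> 0" and "cert_den m \<noteq> 0"
  shows "shift_ratio m = 1 + (m*(1+a+m) + k_poly m)*b*c*d*(e_param m+m+1) / ((1+a+m)*cert_den m)"
proof -
  let ?X = "(m*(1+a+m) + k_poly m)*b*c*d*(e_param m+m+1)" and ?q = "1+a-c-d+m"
  have "shift_ratio m = ((1+a+m)*cert_den m*?q + ?X*?q) / ((1+a+m)*cert_den m*?q)"
    unfolding shift_ratio_def shift_ratio_poly by (simp add: ac_simps)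
  also have "\<dots> = 1 + ?X / ((1+a+m)*cert_den m)"
    using assms by (simp add: add_divide_distrib)
  finally show ?thesis .
qed

(* wz_step divided by contig_term (Suc M) n: the two fractions are the term ratios computed in
   contig_term_shift and contig_term_Suc. *)
lemma wz_rational_identity:
  fixes m n :: complex
  defines "E \<equiv> e_param m"
  assumes nz: "m+1 \<noteq> 0" "1+a+m \<noteq> 0" "1+a-c-d+m \<noteq> 0" "cert_den m \<noteq> 0" "a+2*n \<noteq> 0"
    "E+n \<noteq> 0" "a-E+n \<noteq> 0" "a/2+n \<noteq> 0" "1+a-b+n \<noteq> 0" "1+a-c+n \<noteq> 0" "1+a-d+n \<noteq> 0"
    "1+a+(m+1)+n \<noteq> 0" "n+1 \<noteq> 0" "E+(n+1) \<noteq> 0" "a+2*(n+1) \<noteq> 0"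
  shows "shift_ratio m - (m+1-n)*E*(a-E)*(1+a+m+n)/((m+1)*(E+n)*(a-E+n)*(1+a+m))
     = wz_cert m (n+1) * ((a+n)*(1+a/2+n)*(b+n)*(c+n)*(d+n)*(e_param (m+1)+n)*(-(m+1)+n)
          / ((a/2+n)*(1+a-b+n)*(1+a-c+n)*(1+a-d+n)*(1+a-e_param (m+1)+n)*(1+a+(m+1)+n)*(n+1)))
       - wz_cert m n"
proof -
  define Y where "Y = (m+1)*(1+a+m)*(a+2*n)*cert_den m*(E+n)*(a-E+n)"
  have "Y \<noteq> 0"
    using nz unfolding Y_def by simp
  have "shift_ratio m = (Y + (m*(1+a+m) + k_poly m)*b*c*d*(E+m+1)*(m+1)*(a+2*n)*(E+n)*(a-E+n)) / Y"
  proof -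
    define W where "W = (m+1)*(a+2*n)*(E+n)*(a-E+n)"
    have "W \<noteq> 0"
      using nz unfolding W_def by simp
    have "Y = ((1+a+m)*cert_den m) * W"
      unfolding Y_def W_def by (simp add: ac_simps)
    then show ?thesis
      unfolding shift_ratio_eq[OF nz(2-4), folded E_def] using \<open>Y \<noteq> 0\<close> \<open>W \<noteq> 0\<close>
      by (simp add: add_divide_distrib W_def ac_simps)
  qed
  moreover have "(m+1-n)*E*(a-E)*(1+a+m+n)/((m+1)*(E+n)*(a-E+n)*(1+a+m))
      = (m+1-n)*E*(a-E)*(1+a+m+n)*(a+2*n)*cert_den m / Y"
    unfolding Y_def using nz by (simp add: divide_simps)
  moreover have "wz_cert m (n+1) * ((a+n)*(1+a/2+n)*(b+n)*(c+n)*(d+n)*(e_param (m+1)+n)*(-(m+1)+n)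
          / ((a/2+n)*(1+a-b+n)*(1+a-c+n)*(1+a-d+n)*(1+a-e_param (m+1)+n)*(1+a+(m+1)+n)*(n+1)))
      = (E+m+1)*(a-E)*(a+n)*(b+n)*(c+n)*(d+n)*(n-m-1)*((n-m)*(n+a+m+1) - k_poly m)*(E+n) / Y"
  proof -
    have "e_param (m+1) = E + 1"
      by (simp add: E_def e_param_def)
    then show ?thesis
      unfolding Y_def wz_cert_def E_def[symmetric] using nz
      by (simp add: divide_simps) (intro disjI2, simp (no_asm) only: diff_conv_add_uminus ac_simps)
  qed
  moreover have "wz_cert m n
      = (E+m+1)*(a-E)*(1+a+m+n)*n*(n+a-b)*(n+a-c)*(n+a-d)*((n-m-1)*(n+a+m) - k_poly m)*(a-E+n) / Y"
    unfolding Y_def wz_cert_def E_def[symmetric] using nz by (simp add: divide_simps)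
  ultimately show ?thesis
    using wz_poly[of m n] \<open>Y \<noteq> 0\<close> unfolding E_def[symmetric] Y_def[symmetric]
    by (simp add: diff_divide_distrib[symmetric] add_divide_distrib[symmetric])
qed

context
  assumes nonres: nonresonant
begin

lemma
  shows a_notin_Ints: "a \<notin> \<int>" and a_b_notin_Ints: "a-b \<notin> \<int>"
    and a_c_notin_Ints: "a-c \<notin> \<int>" and a_d_notin_Ints: "a-d \<notin> \<int>"
    and a_b_c_notin_Ints: "a-b-c \<notin> \<int>" and a_b_d_notin_Ints: "a-b-d \<notin> \<int>"
    and a_c_d_notin_Ints: "a-c-d \<notin> \<int>" and a_b_c_d_notin_Ints: "a-b-c-d \<notin> \<int>"
    and e_param_notin_Ints: "e_param 0 \<notin> \<int>"
  using nonres by (simp_all add: nonresonant_def e_param_def)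

lemma half_a_notin_Ints: "a/2 \<notin> \<int>"
proof
  assume "a/2 \<in> \<int>"
  then have "a/2 + a/2 \<in> \<int>"
    using Ints_add by blast
  then show False
    using a_notin_Ints by simp
qed

lemma level_nonzero:
  fixes M :: nat
  defines "m \<equiv> of_nat M"
  shows "1+a+m \<noteq> 0" "1+a-b+m \<noteq> 0" "1+a-c+m \<noteq> 0" "1+a-d+m \<noteq> 0" "a-b-c+m \<noteq> 0"
    "a-b-d+m \<noteq> 0" "1+a-c-d+m \<noteq> 0" "a-b-c-d+m \<noteq> 0" "h_param m \<noteq> 0" "h_param (m+1) \<noteq> 0"
    "m+1 \<noteq> 0"
proof -
  show "1+a+m \<noteq> 0" by (rule nonzero_if_notin_Ints[OF a_notin_Ints]) (simp add: m_def algebra_simps)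
  show "1+a-b+m \<noteq> 0" by (rule nonzero_if_notin_Ints[OF a_b_notin_Ints]) (simp add: m_def algebra_simps)
  show "1+a-c+m \<noteq> 0" by (rule nonzero_if_notin_Ints[OF a_c_notin_Ints]) (simp add: m_def algebra_simps)
  show "1+a-d+m \<noteq> 0" by (rule nonzero_if_notin_Ints[OF a_d_notin_Ints]) (simp add: m_def algebra_simps)
  show "a-b-c+m \<noteq> 0" by (rule nonzero_if_notin_Ints[OF a_b_c_notin_Ints]) (simp add: m_def)
  show "a-b-d+m \<noteq> 0" by (rule nonzero_if_notin_Ints[OF a_b_d_notin_Ints]) (simp add: m_def)
  show "1+a-c-d+m \<noteq> 0" by (rule nonzero_if_notin_Ints[OF a_c_d_notin_Ints]) (simp add: m_def algebra_simps)
  show "a-b-c-d+m \<noteq> 0" by (rule nonzero_if_notin_Ints[OF a_b_c_d_notin_Ints]) (simp add: m_def)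
  show "h_param m \<noteq> 0" "h_param (m+1) \<noteq> 0"
    by (rule nonzero_if_notin_Ints[OF a_c_d_notin_Ints], simp add: h_param_def m_def algebra_simps)+
  show "m+1 \<noteq> 0"
    unfolding m_def by (metis of_nat_Suc of_nat_neq_0 add.commute)
qed

lemma index_nonzero:
  fixes M n :: nat
  defines "m \<equiv> of_nat M" and "x \<equiv> of_nat n" and "E \<equiv> e_param (of_nat M)"
  shows "E+x \<noteq> 0" "a-E+x \<noteq> 0" "1+a+m+x \<noteq> 0" "a+2*x \<noteq> 0" "a/2+x \<noteq> 0"
proof -
  show "E+x \<noteq> 0"
    by (rule nonzero_if_notin_Ints[OF e_param_notin_Ints]) (simp add: E_def e_param_def x_def)
  show "a-E+x \<noteq> 0"
    by (rule nonzero_if_notin_Ints[OF a_b_c_d_notin_Ints]) (simp add: E_def e_param_def x_def algebra_simps)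
  show "1+a+m+x \<noteq> 0" "a+2*x \<noteq> 0"
    by (rule nonzero_if_notin_Ints[OF a_notin_Ints], simp add: m_def x_def algebra_simps)+
  show "a/2+x \<noteq> 0"
    by (rule nonzero_if_notin_Ints[OF half_a_notin_Ints]) (simp add: x_def)
qed

lemma lower_pochhammer_nonzero:
  fixes M n :: nat
  shows "pochhammer (a/2) n \<noteq> 0" "pochhammer (1+a-b) n \<noteq> 0" "pochhammer (1+a-c) n \<noteq> 0"
    "pochhammer (1+a-d) n \<noteq> 0" "pochhammer (1+a-e_param (of_nat M)) n \<noteq> 0"
    "pochhammer (1 + a + of_nat M) n \<noteq> 0"
proof -
  show "pochhammer (a/2) n \<noteq> 0"
    by (rule pochhammer_nonzero_if_notin_Ints[OF half_a_notin_Ints]) simp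
  show "pochhammer (1+a-b) n \<noteq> 0"
    by (rule pochhammer_nonzero_if_notin_Ints[OF a_b_notin_Ints]) (simp add: algebra_simps)
  show "pochhammer (1+a-c) n \<noteq> 0"
    by (rule pochhammer_nonzero_if_notin_Ints[OF a_c_notin_Ints]) (simp add: algebra_simps)
  show "pochhammer (1+a-d) n \<noteq> 0"
    by (rule pochhammer_nonzero_if_notin_Ints[OF a_d_notin_Ints]) (simp add: algebra_simps)
  show "pochhammer (1+a-e_param (of_nat M)) n \<noteq> 0"
    by (rule pochhammer_nonzero_if_notin_Ints[OF a_b_c_d_notin_Ints]) (simp add: e_param_def algebra_simps)
  show "pochhammer (1 + a + of_nat M) n \<noteq> 0"
    by (rule pochhammer_nonzero_if_notin_Ints[OF a_notin_Ints]) (simp add: algebra_simps)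
qed

lemma base_nonzero: "b+c-a \<noteq> 0" "b+d-a \<noteq> 0"
  using nonzero_if_notin_Ints[OF a_b_c_notin_Ints, of "b+c-a"]
    nonzero_if_notin_Ints[OF a_b_d_notin_Ints, of "b+d-a"]
  by simp_all

lemma contig_term_shift:
  fixes M n :: nat
  defines "m \<equiv> of_nat M" and "x \<equiv> of_nat n" and "E \<equiv> e_param (of_nat M)"
  assumes "n \<le> Suc M"
  shows "contig_term M n
    = contig_term (Suc M) n * ((m+1-x)*E*(a-E)*(1+a+m+x)/((m+1)*(E+x)*(a-E+x)*(1+a+m)))"
proof (cases "n = Suc M")
  case True
  then show ?thesis
    by (simp add: contig_term_eq_0 m_def x_def)
next
  case False
  define U where "U = pochhammer a n * pochhammer (1+a/2) n * pochhammer b n * pochhammer c n * pochhammer d n"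
  define L where "L = pochhammer (a/2) n * pochhammer (1+a-b) n * pochhammer (1+a-c) n * pochhammer (1+a-d) n * fact n"
  have term_M: "contig_term M n
      = U * pochhammer E n * pochhammer (-m) n / (L * pochhammer (1+a-E) n * pochhammer (1+a+m) n)"
    unfolding contig_term_def hyper_term_def U_def L_def E_def m_def by (simp add: ac_simps)
  have term_Suc_M: "contig_term (Suc M) n
      = U * pochhammer (E+1) n * pochhammer (-(m+1)) n / (L * pochhammer (a-E) n * pochhammer (a+m+2) n)"
    unfolding contig_term_def hyper_term_def U_def L_def E_def m_def by (simp add: e_param_def algebra_simps)
  have "-(m+1)+x \<noteq> 0"
  proof -
    have "-(m+1)+x = of_nat n - of_nat (Suc M)"
      unfolding m_def x_def by simp
    then show ?thesis
      using False by (simp only: right_minus_eq of_nat_eq_iff) simp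
  qed
  moreover have "L \<noteq> 0"
    using lower_pochhammer_nonzero(1-4) unfolding L_def by simp
  moreover note lower_pochhammer_nonzero(5,6)[of M n, folded E_def m_def]
    index_nonzero(1-3)[of M n, folded E_def m_def x_def] index_nonzero(2)[of M 0, folded E_def]
    level_nonzero(1,11)[of M, folded m_def]
  ultimately have nz: "L \<noteq> 0" "pochhammer (1+a-E) n \<noteq> 0" "pochhammer (1+a+m) n \<noteq> 0" "E+x \<noteq> 0"
    "a-E+x \<noteq> 0" "a-E \<noteq> 0" "1+a+m+x \<noteq> 0" "-(m+1)+x \<noteq> 0" "1+a+m \<noteq> 0" "m+1 \<noteq> 0"
    by simp_all
  have shifts: "pochhammer E n = E * pochhammer (E+1) n / (E+x)"
    "pochhammer (-(m+1)) n = -(m+1) * pochhammer (-m) n / (-(m+1)+x)"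
    "pochhammer (a-E) n = (a-E) * pochhammer (1+a-E) n / (a-E+x)"
    "pochhammer (a+m+2) n = pochhammer (1+a+m) n * (1+a+m+x) / (1+a+m)"
    using nz pochhammer_shift[of E n] pochhammer_shift[of "-(m+1)" n]
      pochhammer_shift[of "a-E" n] pochhammer_shift[of "1+a+m" n]
    by (simp_all add: x_def field_simps)
  show ?thesis
    unfolding term_M term_Suc_M shifts using nz by (simp add: divide_simps) algebra
qed

lemma wz_step:
  fixes M n :: nat
  defines "m \<equiv> of_nat M"
  assumes "k_poly (m+1) \<noteq> 0" and "n \<le> Suc M"
  shows "shift_ratio m * contig_term (Suc M) n - contig_term M n
     = wz_cert m (of_nat (Suc n)) * contig_term (Suc M) (Suc n) - wz_cert m (of_nat n) * contig_term (Suc M) n"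
proof -
  define x where "x = (of_nat n :: complex)"
  define E where "E = e_param m"
  have "cert_den m \<noteq> 0"
    unfolding cert_den_def using level_nonzero[of M] \<open>k_poly (m+1) \<noteq> 0\<close> by (simp add: m_def)
  moreover note index_nonzero(1-3)[of M n] index_nonzero(4,5)[of n]
    index_nonzero(1)[of M "Suc n"] index_nonzero(4)[of "Suc n"] index_nonzero(3)[of "Suc M" n]
    level_nonzero(2-4,11)[of n] level_nonzero(1,7,11)[of M]
  ultimately have nz: "cert_den m \<noteq> 0" "a+2*x \<noteq> 0" "1+a+(m+1)+x \<noteq> 0" "a+2*(x+1) \<noteq> 0"
    "E+x \<noteq> 0" "E+(x+1) \<noteq> 0" "a-E+x \<noteq> 0" "a/2+x \<noteq> 0" "1+a-b+x \<noteq> 0" "1+a-c+x \<noteq> 0"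
    "1+a-d+x \<noteq> 0" "x+1 \<noteq> 0" "1+a+m \<noteq> 0" "1+a-c-d+m \<noteq> 0" "m+1 \<noteq> 0"
    unfolding m_def x_def E_def by (simp_all add: algebra_simps)
  define c1 where "c1 = (m+1-x)*E*(a-E)*(1+a+m+x)/((m+1)*(E+x)*(a-E+x)*(1+a+m))"
  define r2 where "r2 = (a+x)*(1+a/2+x)*(b+x)*(c+x)*(d+x)*(e_param (m+1)+x)*(-(m+1)+x)
      / ((a/2+x)*(1+a-b+x)*(1+a-c+x)*(1+a-d+x)*(1+a-e_param (m+1)+x)*(1+a+(m+1)+x)*(x+1))"
  have shift: "contig_term M n = contig_term (Suc M) n * c1"
    unfolding c1_def m_def x_def E_def using \<open>n \<le> Suc M\<close> by (rule contig_term_shift)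
  have step: "contig_term (Suc M) (Suc n) = contig_term (Suc M) n * r2"
    unfolding r2_def m_def x_def using contig_term_Suc[of "Suc M" n] by (simp add: add.commute)
  have rid: "shift_ratio m - c1 = wz_cert m (x+1) * r2 - wz_cert m x"
    unfolding c1_def r2_def E_def by (rule wz_rational_identity) (use nz in \<open>simp_all add: E_def\<close>)
  have "shift_ratio m * contig_term (Suc M) n - contig_term M n = contig_term (Suc M) n * (shift_ratio m - c1)"
    unfolding shift by (simp add: algebra_simps)
  also have "\<dots> = wz_cert m (x+1) * contig_term (Suc M) (Suc n) - wz_cert m x * contig_term (Suc M) n"
    unfolding rid step by (simp add: algebra_simps)
  finally show ?thesis
    by (simp add: x_def add.commute)
qed

lemma contig_closed_form_step:
  fixes M :: nat
  defines "m \<equiv> of_nat M"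
  assumes "k_poly (m+1) \<noteq> 0"
  shows "contig_closed_form M = shift_ratio m * contig_closed_form (Suc M)"
proof -
  have "pochhammer (a-b-c-d) M \<noteq> 0"
    by (rule pochhammer_nonzero_if_notin_Ints[OF a_b_c_d_notin_Ints]) simp
  with lower_pochhammer_nonzero(2-4) base_nonzero
  show ?thesis
    using level_nonzero[of M] \<open>k_poly (m+1) \<noteq> 0\<close>
    unfolding contig_closed_form_def pi_factor_def shift_ratio_def cert_den_def pochhammer_Suc of_nat_Suc m_def
    by (simp add: divide_simps add.commute[of 1 "of_nat M"])
qed

lemma shift_ratio_nonzero:
  fixes M :: nat
  defines "m \<equiv> of_nat M"
  assumes "k_poly m \<noteq> 0" and "k_poly (m+1) \<noteq> 0"
  shows "shift_ratio m \<noteq> 0"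
  using level_nonzero[of M] assms(2,3) unfolding shift_ratio_def cert_den_def m_def by simp

theorem contig_sum_eq_closed_form:
  assumes "\<forall>M\<le>N. k_poly (of_nat M) \<noteq> 0"
  shows "(\<Sum>n\<le>N. contig_term N n) = contig_closed_form N"
  using assms
proof (induction N)
  case 0
  show ?case
    using level_nonzero(9)[of 0] base_nonzero
    by (simp add: contig_closed_form_def pi_factor_def k_poly_def)
next
  case (Suc M)
  define m where "m = (of_nat M :: complex)"
  define G where "G n = wz_cert m (of_nat n) * contig_term (Suc M) n" for n
  have K: "k_poly m \<noteq> 0" "k_poly (m+1) \<noteq> 0"
    using Suc.prems unfolding m_def by (auto dest: spec[of _ M] spec[of _ "Suc M"] simp: add.commute)
  have "shift_ratio m * (\<Sum>n\<le>Suc M. contig_term (Suc M) n) - (\<Sum>n\<le>Suc M. contig_term M n)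
      = (\<Sum>n<Suc (Suc M). G (Suc n) - G n)"
    unfolding sum_distrib_left sum_subtractf[symmetric] lessThan_Suc_atMost G_def m_def
    by (rule sum.cong) (use wz_step K in \<open>simp_all add: m_def\<close>)
  also have "\<dots> = G (Suc (Suc M)) - G 0"
    by (rule sum_lessThan_telescope)
  also have "\<dots> = 0"
    by (simp add: G_def wz_cert_def contig_term_eq_0)
  finally have "shift_ratio m * (\<Sum>n\<le>Suc M. contig_term (Suc M) n) = (\<Sum>n\<le>M. contig_term M n)"
    by (simp add: contig_term_eq_0)
  also have "\<dots> = contig_closed_form M"
    using Suc by simp
  also have "\<dots> = shift_ratio m * contig_closed_form (Suc M)"
    unfolding m_def by (rule contig_closed_form_step[OF K(2)[unfolded m_def]])
  finally show ?case
    using shift_ratio_nonzero K unfolding m_def by simp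
qed

end

end

(* Along this line each linear form in the definition of nonresonant has nonzero slope. *)
lemma eventually_nonresonant:
  "\<forall>\<^sub>F s in at 0. nonresonant (a + 10 * s) (b + s) (c + 2 * s) (d + 4 * s)"
proof -
  have "\<forall>\<^sub>F s in at 0. a + 10 * s \<notin> \<int> \<and> (a-b) + 9 * s \<notin> \<int> \<and> (a-c) + 8 * s \<notin> \<int>
      \<and> (a-d) + 6 * s \<notin> \<int> \<and> (a-b-c) + 7 * s \<notin> \<int> \<and> (a-b-d) + 5 * s \<notin> \<int>
      \<and> (a-c-d) + 4 * s \<notin> \<int> \<and> (a-b-c-d) + 3 * s \<notin> \<int> \<and> (2*a-b-c-d) + 13 * s \<notin> \<int>"
    by (intro eventually_conj eventually_linear_notin_Ints) simp_all
  then show ?thesis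
    by eventually_elim (simp add: nonresonant_def algebra_simps)
qed

(* Along the same line k_poly is a cubic in s with leading coefficient (-4) (-7) (-5) = -140,
   so its third finite difference is 6 * (-140); in particular it is not identically zero, and
   its zeros are isolated. *)
lemma eventually_k_poly_nonzero:
  "\<forall>\<^sub>F s in at 0. k_poly (a + 10 * s) (b + s) (c + 2 * s) (d + 4 * s) m \<noteq> 0"
proof -
  define g where "g s = k_poly (a + 10 * s) (b + s) (c + 2 * s) (d + 4 * s) m" for s
  have "g holomorphic_on UNIV"
    unfolding g_def k_poly_def h_param_def by (intro holomorphic_intros)
  moreover have "g 3 - 3 * g 2 + 3 * g 1 - g 0 = -840"
    unfolding g_def k_poly_def h_param_def by (simp add: algebra_simps)
  then obtain \<beta> where "g \<beta> \<noteq> 0"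
    by force
  ultimately have "\<forall>\<^sub>F s in at 0. g s \<noteq> 0 \<and> s \<in> UNIV"
    by (intro non_zero_neighbour_alt) auto
  then show ?thesis
    by (simp add: g_def)
qed

lemma isCont_contig_term:
  fixes A B C D :: "complex \<Rightarrow> complex"
  assumes "isCont A z" "isCont B z" "isCont C z" "isCont D z"
    and "\<forall>x\<in>{A z / 2, 1 + A z - B z, 1 + A z - C z, 1 + A z - D z,
          1 + A z - e_param (A z) (B z) (C z) (D z) (of_nat N), 1 + A z + of_nat N}. pochhammer x n \<noteq> 0"
  shows "isCont (\<lambda>s. contig_term (A s) (B s) (C s) (D s) N n) z"
  unfolding contig_term_def hyper_term_def using assms
  by (auto intro!: continuous_intros simp: e_param_def)

lemma isCont_contig_closed_form:
  fixes A B C D :: "complex \<Rightarrow> complex"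
  assumes "isCont A z" "isCont B z" "isCont C z" "isCont D z"
    and "\<forall>x\<in>{1 + A z - B z, 1 + A z - C z, 1 + A z - D z, A z - B z - C z - D z}. pochhammer x N \<noteq> 0"
    and "h_param (A z) (C z) (D z) (of_nat N) * (B z + C z - A z) * (B z + D z - A z) \<noteq> 0"
  shows "isCont (\<lambda>s. contig_closed_form (A s) (B s) (C s) (D s) N) z"
  unfolding contig_closed_form_def pi_factor_def k_poly_def h_param_def using assms
  by (auto intro!: continuous_intros simp: h_param_def)

theorem contig_sum:
  fixes a b c d :: complex and N :: nat
  assumes lower: "\<forall>x\<in>{a/2, 1+a-b, 1+a-c, 1+a-d, 1+a-e_param a b c d (of_nat N), 1 + a + of_nat N}.
      pochhammer x N \<noteq> 0"
    and "h_param a c d (of_nat N) * (b+c-a) * (b+d-a) \<noteq> 0"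
  shows "(\<Sum>n\<le>N. contig_term a b c d N n) = contig_closed_form a b c d N"
proof -
  define L where "L s = (\<Sum>n\<le>N. contig_term (a + 10 * s) (b + s) (c + 2 * s) (d + 4 * s) N n)" for s
  define R where "R s = contig_closed_form (a + 10 * s) (b + s) (c + 2 * s) (d + 4 * s) N" for s
  have "\<forall>\<^sub>F s in at 0. \<forall>M\<in>{..N}. k_poly (a + 10 * s) (b + s) (c + 2 * s) (d + 4 * s) (of_nat M) \<noteq> 0"
    by (intro eventually_ball_finite ballI eventually_k_poly_nonzero) simp
  then have "\<forall>\<^sub>F s in at 0. L s = R s"
    using eventually_nonresonant[of a b c d]
    by eventually_elim (simp add: L_def R_def contig_sum_eq_closed_form)
  moreover have "isCont L 0"
  proof -
    have "pochhammer x n \<noteq> 0"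
      if "x \<in> {a/2, 1+a-b, 1+a-c, 1+a-d, 1+a-e_param a b c d (of_nat N), 1 + a + of_nat N}" and "n \<le> N"
      for x n
      using lower that pochhammer_neq_0_mono by blast
    then show ?thesis
      unfolding L_def by (intro isCont_sum ballI isCont_contig_term continuous_intros) simp_all
  qed
  moreover have "pochhammer (a-b-c-d) N \<noteq> 0"
    using lower pochhammer_minus'[of "-(a-b-c-d)" N] by (simp add: e_param_def algebra_simps)
  then have "isCont R 0"
    unfolding R_def using assms
    by (intro isCont_contig_closed_form continuous_intros) (auto simp: mult.assoc)
  ultimately have "L 0 = R 0"
    by (intro isCont_eq_if_eventually_eq)
  then show ?thesis
    by (simp add: L_def R_def)
qed

lemma hypergeom_eq_contig_sum:
  fixes f a1 d1 d2 :: complex and N :: nat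
  shows "hypergeom
           [f - 1, (f + 1) / 2, a1, d1, d2, 2 * f - 2 - d1 - d2 - a1 + of_nat N, - of_nat N]
           [(f - 1) / 2, f - a1, f - d1, f - d2, 2 + a1 + d1 + d2 - f - of_nat N, f + of_nat N] 1
       = (\<Sum>n\<le>N. contig_term (f - 1) a1 d1 d2 N n)"
proof -
  have "hyper_term
           [f - 1, (f + 1) / 2, a1, d1, d2, 2 * f - 2 - d1 - d2 - a1 + of_nat N, - of_nat N]
           [(f - 1) / 2, f - a1, f - d1, f - d2, 2 + a1 + d1 + d2 - f - of_nat N, f + of_nat N] 1
      = contig_term (f - 1) a1 d1 d2 N"
    unfolding contig_term_def e_param_def by (simp add: field_simps)
  then show ?thesis
    unfolding hypergeom_def by (metis suminf_finite finite_atMost atMost_iff not_le contig_term_eq_0)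
qed

lemma contig_closed_form_eq:
  fixes f a1 d1 d2 h k :: complex and N :: nat
  assumes h_def: "h = 1 - f + d1 + d2 - of_nat N"
    and den: "d1 * d2 - h * (1 + d1 + d2 + a1 - f) \<noteq> 0"
    and k_def: "k = h * (1 + d1 + a1 - f) * (1 + d2 + a1 - f) / (d1 * d2 - h * (1 + d1 + d2 + a1 - f))"
    and "k \<noteq> 0" and "pochhammer k N \<noteq> 0"
  shows "contig_closed_form (f - 1) a1 d1 d2 N
       = (pochhammer f N * pochhammer (f - d1 - d2) N * pochhammer (f - a1 - d1 - 1) N
            * pochhammer (f - a1 - d2 - 1) N)
         / (pochhammer (f - d1) N * pochhammer (f - d2) N * pochhammer (f - a1) N
            * pochhammer (f - a1 - d1 - d2 - 1) N)
         * (pochhammer (k + 1) N / pochhammer k N)"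
proof -
  define B where "B = (1 + d1 + a1 - f) * (1 + d2 + a1 - f)"
  define D where "D = d1 * d2 - h * (1 + d1 + d2 + a1 - f)"
  have kB: "k = h * B / D"
    unfolding k_def B_def D_def by (simp add: mult.assoc)
  have "h * B \<noteq> 0" "D \<noteq> 0"
    using \<open>k \<noteq> 0\<close> den unfolding kB D_def by simp_all
  have "k_poly (f - 1) a1 d1 d2 (of_nat N) / (h_param (f - 1) d1 d2 (of_nat N) * ((a1 + d1 - (f - 1)) * (a1 + d2 - (f - 1))))
      = (h * B + of_nat N * D) / (h * B)"
    unfolding k_poly_def h_param_def B_def D_def h_def by (simp add: algebra_simps)
  also have "\<dots> = (k + of_nat N) / k"
    unfolding kB using \<open>h * B \<noteq> 0\<close> \<open>D \<noteq> 0\<close> by (simp add: field_simps)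
  also have "\<dots> = pochhammer (k + 1) N / pochhammer k N"
    using pochhammer_shift[of k N] assms(4,5) by (simp add: field_simps)
  finally show ?thesis
    unfolding contig_closed_form_def pi_factor_def times_divide_eq_right[symmetric]
    by (simp add: algebra_simps)
qed

theorem mainTheorem13:
  fixes N :: nat and f a1 d1 d2 h k :: complex
  assumes lower_ok: "\<forall>b \<in> set [(f - 1) / 2, f - a1, f - d1, f - d2,
                         2 + a1 + d1 + d2 - f - of_nat N, f + of_nat N]. \<not> nonpos_int b"
    and h_def: "h = 1 - f + d1 + d2 - of_nat N"
    and den: "d1 * d2 - h * (1 + d1 + d2 + a1 - f) \<noteq> 0"
    and k_def: "k = h * (1 + d1 + a1 - f) * (1 + d2 + a1 - f) / (d1 * d2 - h * (1 + d1 + d2 + a1 - f))"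
    and kN: "pochhammer k N \<noteq> 0"
  shows "hypergeom
           [f - 1, (f + 1) / 2, a1, d1, d2, 2 * f - 2 - d1 - d2 - a1 + of_nat N, - of_nat N]
           [(f - 1) / 2, f - a1, f - d1, f - d2, 2 + a1 + d1 + d2 - f - of_nat N, f + of_nat N] 1
       = (pochhammer f N * pochhammer (f - d1 - d2) N * pochhammer (f - a1 - d1 - 1) N
            * pochhammer (f - a1 - d2 - 1) N)
         / (pochhammer (f - d1) N * pochhammer (f - d2) N * pochhammer (f - a1) N
            * pochhammer (f - a1 - d1 - d2 - 1) N)
         * (pochhammer (k + 1) N / pochhammer k N)"
proof (cases "N = 0")
  case True
  then show ?thesis
    unfolding hypergeom_eq_contig_sum by simp
next
  case False
  then have "k \<noteq> 0"
    using kN by (auto simp: pochhammer_0_left)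
  then have hB: "h_param (f - 1) d1 d2 (of_nat N) * (a1 + d1 - (f - 1)) * (a1 + d2 - (f - 1)) \<noteq> 0"
    using k_def by (simp add: h_param_def h_def algebra_simps)
  have lower: "\<forall>x\<in>{(f - 1) / 2, 1 + (f - 1) - a1, 1 + (f - 1) - d1, 1 + (f - 1) - d2,
      1 + (f - 1) - e_param (f - 1) a1 d1 d2 (of_nat N), 1 + (f - 1) + of_nat N}. pochhammer x N \<noteq> 0"
    using lower_ok by (auto simp: e_param_def algebra_simps pochhammer_nonzero_if_not_nonpos_int)
  show ?thesis
    unfolding hypergeom_eq_contig_sum contig_sum[OF lower hB]
    using contig_closed_form_eq[OF h_def den k_def \<open>k \<noteq> 0\<close> kN] .
qed

end
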